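(* Let $F$ be a field, $d\ge 2$ an integer and $\alpha\in F$. Identify the set of monic polynomials $x^d+\sum_{i=0}^{d-1}a_ix^i$ over $F$ with the affine space $F^d$ via $(a_0,\dots,a_{d-1})$. Let $\mathcal{P}\subseteq F^d$ be the set of monic polynomials of degree $d$ over $F$ that have a monic polynomial factor $q(x)$ of degree $m$ with $1\le m\le d-1$ whose constant term equals $\alpha$. Then $\mathcal{P}$ is contained in an affine hypersurface of $F^d$, i.e. there is a nonzero polynomial $H\in F[a_0,\dots,a_{d-1}]$ vanishing at every point of $\mathcal{P}$. *)

theory Defs
  imports "HOL-Library.Poly_Mapping" "HOL-Computational_Algebra.Polynomial"
begin

text \<open>Multivariate polynomials over a commutative ring, represented as finitely
supported maps from monomials (finitely supported exponent vectors
\<open>nat \<Rightarrow>\<^sub>0 nat\<close>, variable \<open>i\<close> being the coordinate \<open>a_i\<close>) to coefficients.\<close>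
type_synonym 'a mpoly = "(nat \<Rightarrow>\<^sub>0 nat) \<Rightarrow>\<^sub>0 'a"

definition mpoly_eval :: "'a::comm_semiring_1 mpoly \<Rightarrow> (nat \<Rightarrow> 'a) \<Rightarrow> 'a" where
  "mpoly_eval H a = (\<Sum>\<mu>\<in>Poly_Mapping.keys H. Poly_Mapping.lookup H \<mu> * (\<Prod>i\<in>Poly_Mapping.keys \<mu>. a i ^ Poly_Mapping.lookup \<mu> i))"

definition mpoly_in_vars :: "nat \<Rightarrow> 'a::zero mpoly \<Rightarrow> bool" where
  "mpoly_in_vars d H \<longleftrightarrow> (\<forall>\<mu>\<in>Poly_Mapping.keys H. Poly_Mapping.keys \<mu> \<subseteq> {..<d})"

definition monic_of :: "nat \<Rightarrow> (nat \<Rightarrow> 'a::comm_ring_1) \<Rightarrow> 'a poly" where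
  "monic_of d a = monom 1 d + (\<Sum>i<d. monom (a i) i)"

definition calP :: "nat \<Rightarrow> 'a::field \<Rightarrow> (nat \<Rightarrow> 'a) set" where
  "calP d \<alpha> = {a. (\<forall>i\<ge>d. a i = 0) \<and>
     (\<exists>q. q dvd monic_of d a \<and> lead_coeff q = 1 \<and> 1 \<le> degree q \<and> degree q \<le> d - 1
          \<and> coeff q 0 = \<alpha>)}"

end

theory Submission
  imports Defs "HOL-Library.Function_Algebras" "HOL-Library.FuncSet"
begin

(* A point of calP is the coefficient vector of a product q g with q monic of degree m,
   q(0) = alpha, and g monic of degree d - m; its coefficients are quadratic polynomials in the
   d - 1 free coefficients of q and g. So calP is covered by the images of d - 1 polynomial maps
   F^(d-1) -> F^d of degree 2. Such images lie on a common hypersurface by counting dimensions: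
   the (N + 1)^d monomials of degree at most N in each variable pull back to functions in a
   space of dimension at most (d - 1) (2dN + 1)^(d - 1), which is smaller for
   N = d (2d + 1)^(d - 1). A linear relation among the pullbacks is the required H. *)

interpretation fun_space: vector_space "\<lambda>c (f :: 'b \<Rightarrow> 'a::field) x. c * f x"
  by unfold_locales (auto simp: fun_eq_iff algebra_simps)

lemma sum_fun_apply: "(\<Sum>i\<in>I. f i) x = (\<Sum>i\<in>I. f i x)"
  by (induction I rule: infinite_finite_induct) auto

lemma fun_space_nontrivial_relation:
  fixes v :: "'i \<Rightarrow> 'b \<Rightarrow> 'a::field"
  assumes "finite M" "finite S" "card S < card M" "v ` M \<subseteq> fun_space.span S"
  obtains c where "\<exists>i\<in>M. c i \<noteq> 0" and "\<forall>x. (\<Sum>i\<in>M. c i * v i x) = 0"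
proof (cases "inj_on v M")
  case False
  then obtain i j where ij: "i \<in> M" "j \<in> M" "i \<noteq> j" "v i = v j"
    unfolding inj_on_def by blast
  define c :: "'i \<Rightarrow> 'a" where "c k = (if k = i then 1 else if k = j then -1 else 0)" for k
  have "(\<Sum>k\<in>M. c k * v k x) = (\<Sum>k\<in>{i, j}. c k * v k x)" for x
    by (rule sum.mono_neutral_right) (use assms(1) ij in \<open>auto simp: c_def\<close>)
  then show thesis
    using ij by (intro that[of c]) (auto simp: c_def)
next
  case True
  have "card (v ` M) \<le> card S \<Longrightarrow> False"
    using assms(3) card_image[OF True] by simp
  then have "fun_space.dependent (v ` M)"
    using fun_space.independent_span_bound[OF assms(2)] assms(4) by blast
  then obtain u where u: "\<exists>w\<in>v ` M. u w \<noteq> 0" "(\<Sum>w\<in>v ` M. (\<lambda>x. u w * w x)) = 0"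
    using fun_space.dependent_finite[of "v ` M"] assms(1) by auto
  have "(\<Sum>i\<in>M. u (v i) * v i x) = 0" for x
    using fun_cong[OF u(2), of x] by (simp add: sum_fun_apply sum.reindex[OF True])
  then show thesis
    using u(1) by (intro that[of "u \<circ> v"]) auto
qed

lemma span_mult_closed:
  fixes f g :: "'b \<Rightarrow> 'a::field"
  assumes "f \<in> fun_space.span A" "g \<in> fun_space.span B"
    and "\<And>a b. a \<in> A \<Longrightarrow> b \<in> B \<Longrightarrow> (\<lambda>x. a x * b x) \<in> fun_space.span C"
  shows "(\<lambda>x. f x * g x) \<in> fun_space.span C"
proof -
  have left_base: "(\<lambda>x. a x * g x) \<in> fun_space.span C" if "a \<in> A" for a
    using assms(2)
  proof (induction rule: fun_space.span_induct_alt)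
    case base
    then show ?case using fun_space.span_zero by (simp add: zero_fun_def)
  next
    case (step c b h)
    have "(\<lambda>x. c * (a x * b x) + a x * h x) \<in> fun_space.span C"
      using fun_space.span_add[OF fun_space.span_scale[OF assms(3)[OF that step(1)]] step(2)]
      by (simp add: plus_fun_def)
    then show ?case by (simp add: algebra_simps)
  qed
  show ?thesis
    using assms(1)
  proof (induction rule: fun_space.span_induct_alt)
    case base
    then show ?case using fun_space.span_zero by (simp add: zero_fun_def)
  next
    case (step c a h)
    have "(\<lambda>x. c * (a x * g x) + h x * g x) \<in> fun_space.span C"
      using fun_space.span_add[OF fun_space.span_scale[OF left_base[OF step(1)]] step(2)]
      by (simp add: plus_fun_def)
    then show ?case by (simp add: algebra_simps)
  qed
qed

definition monomial_fun :: "nat \<Rightarrow> (nat \<Rightarrow> nat) \<Rightarrow> (nat \<Rightarrow> 'a) \<Rightarrow> 'a::comm_semiring_1" where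
  "monomial_fun n \<nu> p = (\<Prod>j<n. p j ^ \<nu> j)"

definition monomial_funs :: "nat \<Rightarrow> nat \<Rightarrow> ((nat \<Rightarrow> 'a::field) \<Rightarrow> 'a) set" where
  "monomial_funs n D = monomial_fun n ` (\<Pi>\<^sub>E j\<in>{..<n}. {..D})"

definition poly_funs :: "nat \<Rightarrow> nat \<Rightarrow> ((nat \<Rightarrow> 'a::field) \<Rightarrow> 'a) set" where
  "poly_funs n D = fun_space.span (monomial_funs n D)"

lemma finite_monomial_funs: "finite (monomial_funs n D)"
  unfolding monomial_funs_def by (intro finite_imageI finite_PiE) auto

lemma card_monomial_funs_le: "card (monomial_funs n D) \<le> (D + 1) ^ n"
proof -
  have "card (monomial_funs n D) \<le> card (\<Pi>\<^sub>E j\<in>{..<n}. {..D})"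
    unfolding monomial_funs_def by (rule card_image_le) (intro finite_PiE, auto)
  then show ?thesis by (simp add: card_PiE)
qed

lemma poly_funs_mono: "D \<le> D' \<Longrightarrow> poly_funs n D \<subseteq> poly_funs n D'"
  unfolding poly_funs_def monomial_funs_def
  by (intro fun_space.span_mono image_mono PiE_mono) auto

lemma monomial_fun_in_poly_funs:
  "\<nu> \<in> (\<Pi>\<^sub>E j\<in>{..<n}. {..D}) \<Longrightarrow> monomial_fun n \<nu> \<in> poly_funs n D"
  unfolding poly_funs_def monomial_funs_def by (intro fun_space.span_base imageI)

lemma const_in_poly_funs: "(\<lambda>p. c) \<in> poly_funs n D"
proof -
  have "monomial_fun n (\<lambda>j\<in>{..<n}. 0) \<in> poly_funs n D"
    by (rule monomial_fun_in_poly_funs) auto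
  then have "(\<lambda>p. c * monomial_fun n (\<lambda>j\<in>{..<n}. 0) p) \<in> poly_funs n D"
    unfolding poly_funs_def by (rule fun_space.span_scale)
  then show ?thesis by (simp add: monomial_fun_def)
qed

lemma var_in_poly_funs:
  assumes "j < n" "1 \<le> D"
  shows "(\<lambda>p. p j) \<in> poly_funs n D"
proof -
  have "monomial_fun n (\<lambda>i\<in>{..<n}. if i = j then 1 else 0) \<in> poly_funs n D"
    using assms(2) by (intro monomial_fun_in_poly_funs) auto
  moreover have "monomial_fun n (\<lambda>i\<in>{..<n}. if i = j then 1 else 0) = (\<lambda>p :: nat \<Rightarrow> 'a. p j)"
    using assms(1)
    by (simp add: fun_eq_iff monomial_fun_def prod.delta' if_distrib[of "\<lambda>e. _ ^ e"] cong: if_cong)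
  ultimately show ?thesis by metis
qed

lemma mult_in_poly_funs:
  assumes "f \<in> poly_funs n D1" "g \<in> poly_funs n D2"
  shows "(\<lambda>p. f p * g p) \<in> poly_funs n (D1 + D2)"
  using assms unfolding poly_funs_def
proof (rule span_mult_closed)
  fix a b :: "(nat \<Rightarrow> 'a) \<Rightarrow> 'a"
  assume "a \<in> monomial_funs n D1" "b \<in> monomial_funs n D2"
  then obtain \<nu> \<nu>' where \<nu>: "\<nu> \<in> (\<Pi>\<^sub>E j\<in>{..<n}. {..D1})" "a = monomial_fun n \<nu>"
    and \<nu>': "\<nu>' \<in> (\<Pi>\<^sub>E j\<in>{..<n}. {..D2})" "b = monomial_fun n \<nu>'"
    unfolding monomial_funs_def by blast
  have "(\<lambda>j\<in>{..<n}. \<nu> j + \<nu>' j) \<in> (\<Pi>\<^sub>E j\<in>{..<n}. {..D1 + D2})"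
    using \<nu>(1) \<nu>'(1) by (auto simp: PiE_def Pi_def add_mono)
  then have "monomial_fun n (\<lambda>j\<in>{..<n}. \<nu> j + \<nu>' j) \<in> poly_funs n (D1 + D2)"
    by (rule monomial_fun_in_poly_funs)
  moreover have "monomial_fun n (\<lambda>j\<in>{..<n}. \<nu> j + \<nu>' j) = (\<lambda>p. a p * b p)"
    by (simp add: \<nu>(2) \<nu>'(2) monomial_fun_def fun_eq_iff power_add prod.distrib)
  ultimately show "(\<lambda>p. a p * b p) \<in> fun_space.span (monomial_funs n (D1 + D2))"
    unfolding poly_funs_def by metis
qed

lemma power_in_poly_funs: "f \<in> poly_funs n D \<Longrightarrow> (\<lambda>p. f p ^ k) \<in> poly_funs n (k * D)"
  by (induction k) (auto simp: const_in_poly_funs dest: mult_in_poly_funs)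

lemma prod_in_poly_funs:
  "finite I \<Longrightarrow> (\<And>i. i \<in> I \<Longrightarrow> f i \<in> poly_funs n (D i)) \<Longrightarrow>
     (\<lambda>p. \<Prod>i\<in>I. f i p) \<in> poly_funs n (\<Sum>i\<in>I. D i)"
  by (induction I rule: finite_induct) (auto simp: const_in_poly_funs intro: mult_in_poly_funs)

lemma sum_in_poly_funs:
  "(\<And>i. i \<in> I \<Longrightarrow> f i \<in> poly_funs n D) \<Longrightarrow> (\<lambda>p. \<Sum>i\<in>I. f i p) \<in> poly_funs n D"
  unfolding poly_funs_def using fun_space.span_sum[of I f] by (simp add: sum_fun_apply[symmetric])

lemma pullback_of_monomial_in_poly_funs:
  assumes "\<And>i. i < d \<Longrightarrow> (\<lambda>p. \<phi> p i) \<in> poly_funs n e" and "\<nu> \<in> (\<Pi>\<^sub>E i\<in>{..<d}. {..N})"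
  shows "(\<lambda>p. \<Prod>i<d. \<phi> p i ^ \<nu> i) \<in> poly_funs n (d * e * N)"
proof -
  have "(\<lambda>p. \<Prod>i<d. \<phi> p i ^ \<nu> i) \<in> poly_funs n (\<Sum>i<d. \<nu> i * e)"
    using assms(1) by (intro prod_in_poly_funs power_in_poly_funs) auto
  also have "\<dots> \<subseteq> poly_funs n (d * e * N)"
  proof (rule poly_funs_mono)
    have "(\<Sum>i<d. \<nu> i * e) \<le> (\<Sum>i<d. N * e)"
      using assms(2) by (intro sum_mono mult_right_mono) auto
    then show "(\<Sum>i<d. \<nu> i * e) \<le> d * e * N" by (simp add: mult_ac)
  qed
  finally show ?thesis .
qed

lemma mpoly_eval_cong:
  assumes "mpoly_in_vars d H" "\<And>i. i < d \<Longrightarrow> a i = b i"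
  shows "mpoly_eval H a = mpoly_eval H b"
proof -
  have "a i = b i" if "\<mu> \<in> Poly_Mapping.keys H" "i \<in> Poly_Mapping.keys \<mu>" for \<mu> i
    using assms that unfolding mpoly_in_vars_def by blast
  then show ?thesis
    unfolding mpoly_eval_def by (auto intro!: sum.cong prod.cong)
qed

definition monomial_of_exponents :: "nat \<Rightarrow> (nat \<Rightarrow> nat) \<Rightarrow> (nat \<Rightarrow>\<^sub>0 nat)" where
  "monomial_of_exponents d e = Abs_poly_mapping (\<lambda>i. if i < d then e i else 0)"

lemma lookup_monomial_of_exponents:
  "Poly_Mapping.lookup (monomial_of_exponents d e) = (\<lambda>i. if i < d then e i else 0)"
  unfolding monomial_of_exponents_def
  by (rule lookup_Abs_poly_mapping, rule finite_subset[of _ "{..<d}"]) auto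

lemma keys_monomial_of_exponents: "Poly_Mapping.keys (monomial_of_exponents d e) \<subseteq> {..<d}"
  by (auto simp: in_keys_iff lookup_monomial_of_exponents split: if_splits)

lemma inj_on_monomial_of_exponents: "inj_on (monomial_of_exponents d) (\<Pi>\<^sub>E i\<in>{..<d}. B i)"
proof
  fix e e' assume e: "e \<in> (\<Pi>\<^sub>E i\<in>{..<d}. B i)" "e' \<in> (\<Pi>\<^sub>E i\<in>{..<d}. B i)"
    and eq: "monomial_of_exponents d e = monomial_of_exponents d e'"
  have "e i = e' i" if "i < d" for i
    using arg_cong[OF eq, of "\<lambda>\<mu>. Poly_Mapping.lookup \<mu> i"] that
    by (simp add: lookup_monomial_of_exponents)
  then show "e = e'"
    using e by (intro PiE_ext) auto
qed

lemma eval_monomial_of_exponents: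
  "(\<Prod>i\<in>Poly_Mapping.keys (monomial_of_exponents d e).
      a i ^ Poly_Mapping.lookup (monomial_of_exponents d e) i) = (\<Prod>i<d. a i ^ e i)"
  by (rule prod.mono_neutral_cong_left[OF _ keys_monomial_of_exponents])
    (auto simp: in_keys_iff lookup_monomial_of_exponents)

lemma exponent_sum_as_mpoly:
  fixes c :: "(nat \<Rightarrow> nat) \<Rightarrow> 'a::comm_semiring_1"
  assumes "finite E" "E \<subseteq> (\<Pi>\<^sub>E i\<in>{..<d}. B i)" "\<exists>e\<in>E. c e \<noteq> 0"
  obtains H where "H \<noteq> 0" and "mpoly_in_vars d H"
    and "\<forall>a. mpoly_eval H a = (\<Sum>e\<in>E. c e * (\<Prod>i<d. a i ^ e i))"
proof -
  let ?mon = "monomial_of_exponents d"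
  have inj: "inj_on ?mon E"
    using inj_on_subset[OF inj_on_monomial_of_exponents assms(2)] .
  define H where "H = Abs_poly_mapping (\<lambda>\<mu>. if \<mu> \<in> ?mon ` E then c (inv_into E ?mon \<mu>) else 0)"
  have lookup_H: "Poly_Mapping.lookup H = (\<lambda>\<mu>. if \<mu> \<in> ?mon ` E then c (inv_into E ?mon \<mu>) else 0)"
    unfolding H_def
    by (rule lookup_Abs_poly_mapping, rule finite_subset[of _ "?mon ` E"]) (use assms(1) in auto)
  then have lookup_H_mon: "Poly_Mapping.lookup H (?mon e) = c e" if "e \<in> E" for e
    using that inj by simp
  have keys_H: "Poly_Mapping.keys H \<subseteq> ?mon ` E"
    by (auto simp: in_keys_iff lookup_H split: if_splits)
  have "mpoly_eval H a = (\<Sum>e\<in>E. c e * (\<Prod>i<d. a i ^ e i))" for a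
  proof -
    have "mpoly_eval H a = (\<Sum>\<mu>\<in>?mon ` E. Poly_Mapping.lookup H \<mu> *
            (\<Prod>i\<in>Poly_Mapping.keys \<mu>. a i ^ Poly_Mapping.lookup \<mu> i))"
      unfolding mpoly_eval_def
      by (rule sum.mono_neutral_left[OF finite_imageI[OF assms(1)] keys_H]) (simp add: in_keys_iff)
    also have "\<dots> = (\<Sum>e\<in>E. c e * (\<Prod>i<d. a i ^ e i))"
      by (simp add: sum.reindex[OF inj] lookup_H_mon eval_monomial_of_exponents)
    finally show ?thesis .
  qed
  moreover have "H \<noteq> 0"
    using assms(3) lookup_H_mon by force
  moreover have "mpoly_in_vars d H"
    using keys_H keys_monomial_of_exponents by (fastforce simp: mpoly_in_vars_def)
  ultimately show thesis
    by (intro that) auto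
qed

(* Functions on K x F^n carrying the pullback along phi m on the fiber over m: one linear
   relation among them serves all maps phi m at once. *)
definition fiber_fun :: "'m \<Rightarrow> ('p \<Rightarrow> 'a::zero) \<Rightarrow> 'm \<times> 'p \<Rightarrow> 'a" where
  "fiber_fun m0 f = (\<lambda>(m, p). if m = m0 then f p else 0)"

lemma fiber_fun_in_span:
  fixes f :: "'p \<Rightarrow> 'a::field" and m0 :: 'm
  assumes "f \<in> fun_space.span B"
  shows "fiber_fun m0 f \<in> fun_space.span (fiber_fun m0 ` B)"
proof -
  interpret module_hom "\<lambda>c (f :: 'p \<Rightarrow> 'a) x. c * f x" "\<lambda>c (f :: 'm \<times> 'p \<Rightarrow> 'a) x. c * f x"
    "fiber_fun m0"
    by unfold_locales (auto simp: fiber_fun_def fun_eq_iff)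
  show ?thesis using assms by (simp add: span_image)
qed

lemma card_fiber_funs_le:
  fixes K :: "'m set"
  assumes "finite K"
  shows "card (\<Union>m\<in>K. fiber_fun m ` (monomial_funs n D :: ((nat \<Rightarrow> 'a::field) \<Rightarrow> 'a) set))
           \<le> card K * (D + 1) ^ n"
proof -
  let ?B = "monomial_funs n D :: ((nat \<Rightarrow> 'a) \<Rightarrow> 'a) set"
  have "card (\<Union>m\<in>K. fiber_fun m ` ?B) \<le> (\<Sum>m\<in>K. card (fiber_fun m ` ?B))"
    using assms by (rule card_UN_le)
  also have "\<dots> \<le> (\<Sum>m\<in>K. card ?B)"
    by (intro sum_mono card_image_le finite_monomial_funs)
  also have "\<dots> = card K * card ?B"
    by simp
  also have "\<dots> \<le> card K * (D + 1) ^ n"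
    by (intro mult_le_mono2 card_monomial_funs_le)
  finally show ?thesis .
qed

lemma pullbacks_of_monomials_dependent:
  fixes \<phi> :: "'m \<Rightarrow> (nat \<Rightarrow> 'a::field) \<Rightarrow> nat \<Rightarrow> 'a"
  assumes "finite K" and \<phi>: "\<And>m i. m \<in> K \<Longrightarrow> i < d \<Longrightarrow> (\<lambda>p. \<phi> m p i) \<in> poly_funs n e"
    and "card K * (d * e * N + 1) ^ n < (N + 1) ^ d"
  obtains c where "\<exists>\<nu>\<in>(\<Pi>\<^sub>E i\<in>{..<d}. {..N}). c \<nu> \<noteq> 0"
    and "\<forall>m\<in>K. \<forall>p. (\<Sum>\<nu>\<in>(\<Pi>\<^sub>E i\<in>{..<d}. {..N}). c \<nu> * (\<Prod>i<d. \<phi> m p i ^ \<nu> i)) = 0"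
proof -
  define E :: "(nat \<Rightarrow> nat) set" where "E = (\<Pi>\<^sub>E i\<in>{..<d}. {..N})"
  define v where "v \<nu> = (\<lambda>(m, p). if m \<in> K then \<Prod>i<d. \<phi> m p i ^ \<nu> i else 0)" for \<nu>
  define B :: "((nat \<Rightarrow> 'a) \<Rightarrow> 'a) set" where "B = monomial_funs n (d * e * N)"
  define S where "S = (\<Union>m\<in>K. fiber_fun m ` B)"
  have "finite E" "finite S"
    unfolding E_def S_def B_def using \<open>finite K\<close> finite_monomial_funs by (auto intro: finite_PiE)
  have "card S \<le> card K * (d * e * N + 1) ^ n"
    unfolding S_def B_def by (rule card_fiber_funs_le[OF \<open>finite K\<close>])
  with assms(3) have "card S < card E"
    by (simp add: E_def card_PiE)
  moreover have "v ` E \<subseteq> fun_space.span S"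
  proof (rule image_subsetI)
    fix \<nu> assume "\<nu> \<in> E"
    have "fiber_fun m (\<lambda>p. \<Prod>i<d. \<phi> m p i ^ \<nu> i) \<in> fun_space.span S" if "m \<in> K" for m
    proof -
      have "fiber_fun m (\<lambda>p. \<Prod>i<d. \<phi> m p i ^ \<nu> i) \<in> fun_space.span (fiber_fun m ` B)"
        using pullback_of_monomial_in_poly_funs[of d "\<phi> m", OF \<phi>[OF that] \<open>\<nu> \<in> E\<close>[unfolded E_def]]
        unfolding poly_funs_def B_def by (rule fiber_fun_in_span)
      also have "\<dots> \<subseteq> fun_space.span S"
        using that unfolding S_def by (intro fun_space.span_mono) blast
      finally show ?thesis .
    qed
    moreover have "v \<nu> = (\<Sum>m\<in>K. fiber_fun m (\<lambda>p. \<Prod>i<d. \<phi> m p i ^ \<nu> i))"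
      using \<open>finite K\<close> by (auto simp: fun_eq_iff v_def fiber_fun_def sum_fun_apply)
    ultimately show "v \<nu> \<in> fun_space.span S"
      by (simp add: fun_space.span_sum)
  qed
  ultimately obtain c where "\<exists>\<nu>\<in>E. c \<nu> \<noteq> 0" and relation: "\<forall>x. (\<Sum>\<nu>\<in>E. c \<nu> * v \<nu> x) = 0"
    by (rule fun_space_nontrivial_relation[OF \<open>finite E\<close> \<open>finite S\<close>])
  moreover have "(\<Sum>\<nu>\<in>E. c \<nu> * (\<Prod>i<d. \<phi> m p i ^ \<nu> i)) = 0" if "m \<in> K" for m p
    using relation[rule_format, of "(m, p)"] that by (simp add: v_def)
  ultimately show thesis
    by (intro that[of c]) (simp_all add: E_def)
qed

lemma exists_mpoly_vanishing_on_images: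
  fixes \<phi> :: "'m \<Rightarrow> (nat \<Rightarrow> 'a::field) \<Rightarrow> nat \<Rightarrow> 'a"
  assumes "finite K" "\<And>m i. m \<in> K \<Longrightarrow> i < d \<Longrightarrow> (\<lambda>p. \<phi> m p i) \<in> poly_funs n e"
    and "card K * (d * e * N + 1) ^ n < (N + 1) ^ d"
  shows "\<exists>H. H \<noteq> 0 \<and> mpoly_in_vars d H \<and> (\<forall>m\<in>K. \<forall>p. mpoly_eval H (\<phi> m p) = 0)"
proof -
  let ?E = "\<Pi>\<^sub>E i\<in>{..<d}. {..N}"
  obtain c where nontrivial: "\<exists>\<nu>\<in>?E. c \<nu> \<noteq> 0"
    and relation: "\<forall>m\<in>K. \<forall>p. (\<Sum>\<nu>\<in>?E. c \<nu> * (\<Prod>i<d. \<phi> m p i ^ \<nu> i)) = 0"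
    by (rule pullbacks_of_monomials_dependent[of K d \<phi> n e N, OF assms])
  have "finite ?E"
    by (intro finite_PiE) auto
  then obtain H where "H \<noteq> 0" "mpoly_in_vars d H"
    and "\<forall>a. mpoly_eval H a = (\<Sum>\<nu>\<in>?E. c \<nu> * (\<Prod>i<d. a i ^ \<nu> i))"
    using subset_refl nontrivial by (rule exponent_sum_as_mpoly)
  with relation show ?thesis by auto
qed

(* The parameters of a point of calP: p 0, ..., p (m - 2) are the inner coefficients of the
   factor q, and p (m - 1), ..., p (d - 2) the non-leading coefficients of the cofactor. *)
definition factor_coeff :: "'a::field \<Rightarrow> nat \<Rightarrow> (nat \<Rightarrow> 'a) \<Rightarrow> nat \<Rightarrow> 'a" where
  "factor_coeff \<alpha> m p i =
     (if i = 0 then \<alpha> else if i < m then p (i - 1) else if i = m then 1 else 0)"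

definition cofactor_coeff :: "nat \<Rightarrow> nat \<Rightarrow> (nat \<Rightarrow> 'a::field) \<Rightarrow> nat \<Rightarrow> 'a" where
  "cofactor_coeff d m p j = (if j < d - m then p (m - 1 + j) else if j = d - m then 1 else 0)"

definition product_coeff :: "'a::field \<Rightarrow> nat \<Rightarrow> nat \<Rightarrow> (nat \<Rightarrow> 'a) \<Rightarrow> nat \<Rightarrow> 'a" where
  "product_coeff \<alpha> d m p k = (\<Sum>i\<le>k. factor_coeff \<alpha> m p i * cofactor_coeff d m p (k - i))"

lemma coeff_monic_of: "coeff (monic_of d a) k = (if k = d then 1 else if k < d then a k else 0)"
  by (simp add: monic_of_def coeff_sum coeff_monom sum.delta' if_distrib[of "\<lambda>x. x = _"]
      cong: if_cong)

lemma degree_monic_of: "degree (monic_of d a) = d"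
  by (rule antisym[OF degree_le le_degree]) (auto simp: coeff_monic_of)

lemma lead_coeff_monic_of: "lead_coeff (monic_of d a) = 1"
  by (simp add: degree_monic_of coeff_monic_of)

lemma calP_imp_product_coeff:
  assumes "a \<in> calP d \<alpha>"
  shows "\<exists>m \<in> {1..<d}. \<exists>p. \<forall>k<d. a k = product_coeff \<alpha> d m p k"
proof -
  obtain q where q: "q dvd monic_of d a" "lead_coeff q = 1" "1 \<le> degree q" "degree q \<le> d - 1"
    "coeff q 0 = \<alpha>"
    using assms unfolding calP_def by blast
  obtain g where g: "monic_of d a = q * g" using q(1) by (auto elim: dvdE)
  have "q \<noteq> 0" "g \<noteq> 0" using g lead_coeff_monic_of[of d a] by auto
  define m where "m = degree q"
  have dg: "degree g = d - m"
    using degree_mult_eq[OF \<open>q \<noteq> 0\<close> \<open>g \<noteq> 0\<close>] g degree_monic_of[of d a] m_def by simp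
  have lg: "lead_coeff g = 1"
    using lead_coeff_mult[of q g] g lead_coeff_monic_of[of d a] q(2) by simp
  define p where "p j = (if j < m - 1 then coeff q (j + 1) else coeff g (j - (m - 1)))" for j
  have cq: "coeff q i = factor_coeff \<alpha> m p i" for i
    using q(2,5) by (auto simp: factor_coeff_def p_def m_def coeff_eq_0)
  have cg: "coeff g j = cofactor_coeff d m p j" for j
    using lg dg by (auto simp: cofactor_coeff_def p_def coeff_eq_0)
  have "a k = product_coeff \<alpha> d m p k" if "k < d" for k
    using coeff_monic_of[of d a k] that unfolding g coeff_mult product_coeff_def cq cg by simp
  moreover have "m \<in> {1..<d}" using q(3,4) m_def by auto
  ultimately show ?thesis by blast
qed

lemma product_coeff_in_poly_funs:
  assumes "m \<in> {1..<d}"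
  shows "(\<lambda>p. product_coeff \<alpha> d m p k) \<in> poly_funs (d - 1) 2"
proof -
  have "(\<lambda>p. factor_coeff \<alpha> m p i) \<in> poly_funs (d - 1) 1" for i
  proof (cases "0 < i \<and> i < m")
    case True
    then have "i - 1 < d - 1" using assms by auto
    then have "(\<lambda>p. p (i - 1)) \<in> poly_funs (d - 1) 1" by (rule var_in_poly_funs) simp
    then show ?thesis using True by (simp add: factor_coeff_def)
  next
    case False
    then have "(\<lambda>p. factor_coeff \<alpha> m p i) = (\<lambda>_. factor_coeff \<alpha> m 0 i)"
      by (auto simp: factor_coeff_def fun_eq_iff)
    then show ?thesis by (metis const_in_poly_funs)
  qed
  moreover have "(\<lambda>p. cofactor_coeff d m p j) \<in> poly_funs (d - 1) 1" for j
  proof (cases "j < d - m")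
    case True
    then have "m - 1 + j < d - 1" using assms by auto
    then have "(\<lambda>p. p (m - 1 + j)) \<in> poly_funs (d - 1) 1" by (rule var_in_poly_funs) simp
    then show ?thesis using True by (simp add: cofactor_coeff_def)
  next
    case False
    then show ?thesis by (simp add: cofactor_coeff_def const_in_poly_funs)
  qed
  ultimately show ?thesis
    unfolding product_coeff_def one_add_one[symmetric] by (intro sum_in_poly_funs mult_in_poly_funs)
qed

lemma monomial_count_exceeds_dimension:
  fixes d :: nat
  assumes "1 \<le> d"
  defines "N \<equiv> d * (2 * d + 1) ^ (d - 1)"
  shows "(d - 1) * (d * 2 * N + 1) ^ (d - 1) < (N + 1) ^ d"
proof -
  have "1 \<le> N" using assms by (simp add: N_def)
  then have "d * 2 * N + 1 \<le> (2 * d + 1) * N" by (simp add: algebra_simps)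
  then have "(d - 1) * (d * 2 * N + 1) ^ (d - 1) \<le> d * ((2 * d + 1) * N) ^ (d - 1)"
    by (intro mult_mono power_mono) auto
  also have "\<dots> = (d * (2 * d + 1) ^ (d - 1)) * N ^ (d - 1)"
    by (simp only: power_mult_distrib mult.assoc)
  also have "\<dots> = N * N ^ (d - 1)"
    by (simp add: N_def)
  also have "\<dots> = N ^ d"
    using assms(1) by (simp add: power_eq_if)
  also have "\<dots> < (N + 1) ^ d"
    using assms(1) by (intro power_strict_mono) auto
  finally show ?thesis .
qed

theorem theorem2p1:
  fixes \<alpha> :: "'a::field" and d :: nat
  assumes "d \<ge> 2"
  shows "\<exists>H :: 'a mpoly. H \<noteq> 0 \<and> mpoly_in_vars d H \<and>
           (\<forall>a\<in>calP d \<alpha>. mpoly_eval H a = 0)"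
proof -
  define N where "N = d * (2 * d + 1) ^ (d - 1)"
  have "card {1..<d} * (d * 2 * N + 1) ^ (d - 1) < (N + 1) ^ d"
    using monomial_count_exceeds_dimension[of d] assms by (simp add: N_def)
  then obtain H :: "'a mpoly" where H: "H \<noteq> 0" "mpoly_in_vars d H"
    and vanish: "\<forall>m\<in>{1..<d}. \<forall>p. mpoly_eval H (product_coeff \<alpha> d m p) = 0"
    using exists_mpoly_vanishing_on_images[of "{1..<d}" d "product_coeff \<alpha> d" "d - 1" 2 N]
      product_coeff_in_poly_funs by blast
  have "mpoly_eval H a = 0" if a: "a \<in> calP d \<alpha>" for a
  proof -
    obtain m p where "m \<in> {1..<d}" "\<forall>k<d. a k = product_coeff \<alpha> d m p k"
      using calP_imp_product_coeff[OF a] by blast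
    then show ?thesis
      using vanish mpoly_eval_cong[OF H(2)] by metis
  qed
  with H show ?thesis by blast
qed

end
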